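(* Let $f:\{1,\dots,n\}\to\{0,1\}$, let $S=\{i: f(i)=1\}$, and let $T=f(1)f(2)\cdots f(n)$ be the corresponding binary string. Then the number $z$ of factors in the LZ77 factorization of $T$ satisfies $z\le 3|S|+2$.
   Context: LZ77 factorization (greedy): start with $i=1$; while $i\le n$: if $T[i]$ is the first occurrence of its symbol, $T[i]$ is the next factor and $i\gets i+1$; otherwise take the largest $j\ge i$ such that $T[i..j]$ occurs in $T$ starting at some position $i'<i$ (overlap allowed), make $T[i..j]$ the next factor and set $i\gets j+1$. $z$ is the number of factors. *)

theory Defs
  imports Main
begin

text \<open>Strings are lists, positions are 0-indexed (position i here = position i+1 in the paper).
  T[i..i+l-1] occurs in T starting at some earlier position i' < i (overlap allowed).\<close>

definition occurs_earlier :: "'a list \<Rightarrow> nat \<Rightarrow> nat \<Rightarrow> bool" where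
  "occurs_earlier T i l \<longleftrightarrow> i + l \<le> length T \<and>
     (\<exists>i' < i. \<forall>k < l. T ! (i' + k) = T ! (i + k))"

definition lz_factor_len :: "'a list \<Rightarrow> nat \<Rightarrow> nat" where
  "lz_factor_len T i =
     (if T ! i \<notin> set (take i T) then 1
      else Greatest (\<lambda>l. l \<ge> 1 \<and> occurs_earlier T i l))"

function lz_count :: "'a list \<Rightarrow> nat \<Rightarrow> nat" where
  "lz_count T i =
     (if i < length T then Suc (lz_count T (i + max 1 (lz_factor_len T i))) else 0)"
  by auto
termination
  by (relation "measure (\<lambda>(T, i). length T - i)") auto

definition lz77_z :: "'a list \<Rightarrow> nat" where
  "lz77_z T = lz_count T 0"

end

theory Submission
  imports Defs
begin

text \<open>Greedy LZ77 charges each factor of a binary string either to a \<open>1\<close> it contains or to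
  the run of \<open>0\<close>s it lies in. A run of \<open>0\<close>s receives at most two factors: a factor starting
  strictly inside the run can copy from one position back, so it extends to the end of the run.
  With at most \<open>|S| + 1\<close> runs of \<open>0\<close>s this gives \<open>z \<le> |S| + 2 (|S| + 1)\<close>.\<close>

definition lz_next :: "'a list \<Rightarrow> nat \<Rightarrow> nat" where
  "lz_next T i = i + max 1 (lz_factor_len T i)"

lemma lz_factor_len_ge:
  assumes "occurs_earlier T i l"
  shows "l \<le> lz_factor_len T i"
proof (cases "l = 0")
  case False
  from assms have len: "i + l \<le> length T"
    unfolding occurs_earlier_def by blast
  from assms obtain i' where "i' < i" and "\<forall>k<l. T ! (i' + k) = T ! (i + k)"
    unfolding occurs_earlier_def by blast
  then have "T ! i = take i T ! i'" and "i' < length (take i T)"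
    using False len by (auto dest: spec[of _ 0])
  then have "T ! i \<in> set (take i T)"
    by (metis nth_mem)
  then have "lz_factor_len T i = (GREATEST l. 1 \<le> l \<and> occurs_earlier T i l)"
    by (simp add: lz_factor_len_def)
  moreover have "l \<le> (GREATEST l. 1 \<le> l \<and> occurs_earlier T i l)"
  proof (rule Greatest_le_nat[where b = "length T"])
    show "1 \<le> l \<and> occurs_earlier T i l" using assms False by simp
    show "l' \<le> length T" if "1 \<le> l' \<and> occurs_earlier T i l'" for l'
      using that by (simp add: occurs_earlier_def)
  qed
  ultimately show ?thesis by simp
qed simp

lemma occurs_earlier_if_constant:
  assumes "0 < i" "i + l \<le> length T" "\<forall>p. i - 1 \<le> p \<and> p < i + l \<longrightarrow> T ! p = c"
  shows "occurs_earlier T i l"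
proof -
  have "T ! (i - 1 + k) = T ! (i + k)" if "k < l" for k
  proof -
    have "i - 1 \<le> i - 1 + k \<and> i - 1 + k < i + l" "i - 1 \<le> i + k \<and> i + k < i + l"
      using assms(1) that by auto
    then show ?thesis using assms(3) by metis
  qed
  then show ?thesis
    unfolding occurs_earlier_def using assms(1,2) by (auto intro!: exI[of _ "i - 1"])
qed

lemma lz_next_leaves_run:
  assumes "0 < i" "lz_next T i < length T"
    and "\<forall>p. i - 1 \<le> p \<and> p < lz_next T i \<longrightarrow> T ! p = c"
  shows "T ! lz_next T i \<noteq> c"
proof
  assume "T ! lz_next T i = c"
  with assms(3) have "\<forall>p. i - 1 \<le> p \<and> p < i + (lz_next T i + 1 - i) \<longrightarrow> T ! p = c"
    by (auto simp: less_Suc_eq lz_next_def)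
  then have "occurs_earlier T i (lz_next T i + 1 - i)"
    using assms(1,2) by (intro occurs_earlier_if_constant) (auto simp: lz_next_def)
  then have "lz_next T i + 1 - i \<le> lz_factor_len T i"
    by (rule lz_factor_len_ge)
  then show False by (simp add: lz_next_def)
qed

definition ones_from :: "nat list \<Rightarrow> nat \<Rightarrow> nat" where
  "ones_from T i = count_list (drop i T) 1"

text \<open>Three units per remaining \<open>1\<close>, plus the factors still to be charged to a run of \<open>0\<close>s at
  position \<open>i\<close>: two if the run starts at \<open>i\<close>, one if \<open>i\<close> lies strictly inside it.\<close>

definition lz_potential :: "nat list \<Rightarrow> nat \<Rightarrow> nat" where
  "lz_potential T i = 3 * ones_from T i +
     (if length T \<le> i \<or> T ! i = 1 then 0 else if 0 < i \<and> T ! (i - 1) = 0 then 1 else 2)"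

lemma ones_from_split:
  "i \<le> j \<Longrightarrow> ones_from T i = count_list (take (j - i) (drop i T)) 1 + ones_from T j"
  unfolding ones_from_def
  by (metis append_take_drop_id count_list_append drop_drop le_add_diff_inverse2)

lemma lz_potential_bounds:
  "3 * ones_from T i \<le> lz_potential T i" "lz_potential T i \<le> 3 * ones_from T i + 2"
  by (simp_all add: lz_potential_def)

lemma lz_potential_lz_next_less:
  assumes binary: "set T \<subseteq> {0, 1}" and i: "i < length T"
  shows "lz_potential T (lz_next T i) < lz_potential T i"
proof -
  define j where "j = lz_next T i"
  define F where "F = take (j - i) (drop i T)"
  have "i < j" by (simp add: j_def lz_next_def)
  then have ones: "ones_from T i = count_list F 1 + ones_from T j"
    unfolding F_def using ones_from_split[of i j T] by simp
  show ?thesis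
  proof (cases "1 \<in> set F")
    case True
    then have "ones_from T j < ones_from T i" using ones count_list_0_iff by fastforce
    then show ?thesis using lz_potential_bounds[of T j] lz_potential_bounds[of T i]
      unfolding j_def by linarith
  next
    case False
    have zero: "T ! p = 0" if "i \<le> p" "p < j" "p < length T" for p
    proof -
      have "T ! p = F ! (p - i)" "p - i < length F"
        unfolding F_def using that by auto
      then have "T ! p \<noteq> 1" using False nth_mem by metis
      moreover have "T ! p \<in> {0, 1}" using binary nth_mem that(3) by blast
      ultimately show ?thesis by simp
    qed
    have same_ones: "ones_from T j = ones_from T i" using ones False by simp
    have pot_i: "3 * ones_from T i + 1 \<le> lz_potential T i"
      using zero[of i] i \<open>i < j\<close> by (simp add: lz_potential_def)
    have "T ! j \<in> {0, 1}" if "j < length T" using binary nth_mem that by blast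
    then consider "length T \<le> j" | "j < length T" "T ! j = 1" | "j < length T" "T ! j = 0"
      by fastforce
    then show ?thesis
    proof cases
      case 1
      then have "lz_potential T j = 0" by (simp add: lz_potential_def ones_from_def)
      then show ?thesis using pot_i unfolding j_def by simp
    next
      case 2
      then have "lz_potential T j = 3 * ones_from T i" by (simp add: lz_potential_def same_ones)
      then show ?thesis using pot_i unfolding j_def by simp
    next
      case 3
      have "T ! (j - 1) = 0" using zero[of "j - 1"] \<open>i < j\<close> 3(1) by simp
      then have "lz_potential T j = 3 * ones_from T i + 1"
        using 3 \<open>i < j\<close> by (simp add: lz_potential_def same_ones)
      moreover have "\<not> (0 < i \<and> T ! (i - 1) = 0)"
      proof
        assume start: "0 < i \<and> T ! (i - 1) = 0"
        have "T ! p = 0" if "i - 1 \<le> p" "p < j" for p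
          using start zero[of p] that 3(1) by (cases "p = i - 1") auto
        then show False using lz_next_leaves_run[of i T 0] start 3 unfolding j_def by blast
      qed
      then have "lz_potential T i = 3 * ones_from T i + 2"
        using zero[of i] i \<open>i < j\<close> by (simp add: lz_potential_def)
      ultimately show ?thesis unfolding j_def by simp
    qed
  qed
qed

lemma lz_count_le_lz_potential:
  assumes "set T \<subseteq> {0, 1}"
  shows "lz_count T i \<le> lz_potential T i"
  using assms
proof (induction T i rule: lz_count.induct)
  case (1 T i)
  show ?case
  proof (cases "i < length T")
    case True
    then have "lz_count T i = Suc (lz_count T (lz_next T i))"
      by (simp add: lz_next_def)
    also have "\<dots> \<le> Suc (lz_potential T (lz_next T i))"
      using 1 True by (simp add: lz_next_def)
    also have "\<dots> \<le> lz_potential T i"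
      using lz_potential_lz_next_less[OF "1.prems" True] by simp
    finally show ?thesis .
  qed simp
qed

theorem lemma11:
  fixes n :: nat and f :: "nat \<Rightarrow> nat"
  assumes "\<forall>i \<in> {1..n}. f i \<in> {0, 1}"
  defines "S \<equiv> {i \<in> {1..n}. f i = 1}"
  defines "T \<equiv> map f [1..<n+1]"
  shows "lz77_z T \<le> 3 * card S + 2"
proof -
  have "set T = f ` {1..n}"
    unfolding T_def by (simp add: atLeastLessThanSuc_atLeastAtMost del: upt_Suc)
  then have binary: "set T \<subseteq> {0, 1}"
    using assms(1) by auto
  have "count_list T 1 = card ({i. 1 = f i} \<inter> {1..<n+1})"
    unfolding T_def count_list_eq_length_filter
    by (simp add: filter_map distinct_length_filter del: upt_Suc)
  also have "\<dots> = card S"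
    unfolding S_def by (rule arg_cong[where f = card]) auto
  finally have ones: "count_list T 1 = card S" .
  have "lz77_z T \<le> lz_potential T 0"
    unfolding lz77_z_def by (rule lz_count_le_lz_potential[OF binary])
  also have "\<dots> \<le> 3 * count_list T 1 + 2"
    by (simp add: lz_potential_def ones_from_def)
  finally show ?thesis
    using ones by simp
qed

end
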